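(* Consider the relative dynamics described in the context, with initial position $\mathbf{x}_0=(x_0,y_0)$, $\|\mathbf{x}_0\|>1$, $y_0\ge 0$, and game duration $T>0$. Capture is guaranteed (i.e. for every heading function $\psi(\cdot)$ there is $t\le T$ with $\|\mathbf{x}(t)\|<1$) if and only if $$\mu x_0+\sqrt{1-\mu^2}\,y_0<1,\qquad x_0>\mu,$$ and $$T>T_{\rm survive}(\mathbf{x}_0):=\frac{1}{1-\mu^2}\Big[(x_0-\mu)-\sqrt{(1-\mu x_0)^2-(1-\mu^2)y_0^2}\Big].$$
   Context: Pursuer-fixed frame: the Evader's relative position $\mathbf{x}(t)=(x(t),y(t))\in\mathbb{R}^2$ evolves as $\dot x=\mu\cos\psi(t)-1$, $\dot y=\mu\sin\psi(t)$, $\mathbf{x}(0)=\mathbf{x}_0$, where $\mu\in(0,1)$ and $\psi(t)$ is the Evader's heading (its control). The Proximity Circle is $\|\mathbf{x}\|=1$; capture occurs when $\|\mathbf{x}(t)\|<1$. The paper assumes throughout (by symmetry about the $x$-axis) that $y\ge 0$. *)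

theory Defs
  imports "HOL-Analysis.Analysis"
begin

text \<open>Relative (pursuer-fixed frame) position of the Evader at time t under heading
  function psi, obtained by integrating the dynamics
  x' = mu cos psi - 1, y' = mu sin psi from (x0,y0) at time 0.\<close>
definition traj :: "real \<Rightarrow> real \<Rightarrow> real \<Rightarrow> (real \<Rightarrow> real) \<Rightarrow> real \<Rightarrow> real \<times> real" where
  "traj mu x0 y0 psi t =
     (x0 + integral {0..t} (\<lambda>s. mu * cos (psi s) - 1),
      y0 + integral {0..t} (\<lambda>s. mu * sin (psi s)))"

definition T_survive :: "real \<Rightarrow> real \<Rightarrow> real \<Rightarrow> real" where
  "T_survive mu x0 y0 =
     1 / (1 - mu^2) * ((x0 - mu) - sqrt ((1 - mu * x0)^2 - (1 - mu^2) * y0^2))"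

end

(* At time t every admissible trajectory lies in the closed disk of radius mu t about the drift
   point (x0 - t, y0), and every point of its boundary is reached by a constant heading. Capture
   is therefore guaranteed exactly when this disk lies inside the open unit disk at some t \<le> T.
   If it never does, the Evader holds a constant heading u keeping it in a half-plane
   {u \<bullet> x \<ge> 1}: u = (mu, sqrt (1 - mu^2)) when the drift line misses the unit disk, u
   pointing along (x0, y0) when x0 \<le> mu, and otherwise the direction of first tangency, which
   occurs at T_survive, the smaller root of a quadratic. *)

theory Submission
  imports Defs
begin

definition capture_guaranteed :: "real \<Rightarrow> real \<Rightarrow> real \<Rightarrow> real \<Rightarrow> bool" where
  "capture_guaranteed mu x0 y0 T \<longleftrightarrow>
     (\<forall>psi. psi \<in> borel_measurable lborel \<longrightarrow> (\<exists>t\<in>{0..T}. norm (traj mu x0 y0 psi t) < 1))"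

lemma norm_heading_velocity: "norm (mu * cos c, mu * sin c) = \<bar>mu\<bar>"
proof -
  have "(mu * cos c)^2 + (mu * sin c)^2 = mu^2"
    by (simp add: power_mult_distrib flip: distrib_left)
  then show ?thesis by (simp add: norm_Pair)
qed

lemma heading_velocity_integrable:
  fixes psi :: "real \<Rightarrow> real"
  assumes "psi \<in> borel_measurable lborel"
  shows "(\<lambda>s. (mu * cos (psi s), mu * sin (psi s))) integrable_on {a..b}"
proof (rule measurable_bounded_by_integrable_imp_integrable)
  have "(\<lambda>s. (mu * cos (psi s), mu * sin (psi s))) \<in> borel_measurable lborel"
    using assms by measurable
  then show "(\<lambda>s. (mu * cos (psi s), mu * sin (psi s))) \<in> borel_measurable (lebesgue_on {a..b})"
    by (intro measurable_restrict_space1 measurable_completion)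
qed (auto simp: norm_heading_velocity)

lemma traj_eq_drift_plus_integral:
  fixes psi :: "real \<Rightarrow> real"
  assumes "psi \<in> borel_measurable lborel" and "0 \<le> t"
  shows "traj mu x0 y0 psi t = (x0 - t, y0) + integral {0..t} (\<lambda>s. (mu * cos (psi s), mu * sin (psi s)))"
proof -
  let ?F = "\<lambda>s. (mu * cos (psi s), mu * sin (psi s))"
  have F: "?F integrable_on {0..t}"
    using assms(1) by (rule heading_velocity_integrable)
  have cos_integrable: "(\<lambda>s. mu * cos (psi s)) integrable_on {0..t}"
    using integrable_linear[OF F bounded_linear_fst] by (simp add: o_def)
  have "integral {0..t} (\<lambda>s. mu * cos (psi s) - 1) = integral {0..t} (\<lambda>s. mu * cos (psi s)) - t"
    using integral_diff[OF cos_integrable integrable_const_ivl[of 1 0 t]] assms(2) by simp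
  moreover have "integral {0..t} (\<lambda>s. mu * cos (psi s)) = fst (integral {0..t} ?F)"
    and "integral {0..t} (\<lambda>s. mu * sin (psi s)) = snd (integral {0..t} ?F)"
    using integral_linear[OF F bounded_linear_fst] integral_linear[OF F bounded_linear_snd]
    by (simp_all add: o_def)
  ultimately show ?thesis
    by (simp add: traj_def prod_eq_iff)
qed

lemma dist_traj_drift_le:
  fixes psi :: "real \<Rightarrow> real"
  assumes "psi \<in> borel_measurable lborel" and "0 \<le> t"
  shows "dist (traj mu x0 y0 psi t) (x0 - t, y0) \<le> \<bar>mu\<bar> * t"
proof -
  have "norm (integral {0..t} (\<lambda>s. (mu * cos (psi s), mu * sin (psi s))))
          \<le> integral {0..t} (\<lambda>_. \<bar>mu\<bar>)"
    using assms(1) by (intro integral_norm_bound_integral heading_velocity_integrable)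
      (auto simp: norm_heading_velocity)
  then show ?thesis
    using assms by (simp add: traj_eq_drift_plus_integral dist_norm mult.commute)
qed

lemma capture_guaranteed_if_reachable_disk_inside:
  assumes "0 \<le> t" and "t \<le> T" and "norm (x0 - t, y0) + \<bar>mu\<bar> * t < 1"
  shows "capture_guaranteed mu x0 y0 T"
  unfolding capture_guaranteed_def
proof (intro allI impI bexI)
  fix psi :: "real \<Rightarrow> real"
  assume "psi \<in> borel_measurable lborel"
  then have "dist (traj mu x0 y0 psi t) (x0 - t, y0) \<le> \<bar>mu\<bar> * t"
    using assms(1) by (rule dist_traj_drift_le)
  then show "norm (traj mu x0 y0 psi t) < 1"
    using norm_triangle_sub[of "traj mu x0 y0 psi t" "(x0 - t, y0)"] assms(3)
    by (simp add: dist_norm)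
qed (use assms in auto)

lemma traj_const_heading:
  assumes "0 \<le> t"
  shows "traj mu x0 y0 (\<lambda>_. c) t = (x0 + t * (mu * cos c - 1), y0 + t * (mu * sin c))"
  using assms by (simp add: traj_def mult.commute)

text \<open>An Evader holding the heading u keeps u \<bullet> x(t) = u \<bullet> x0 + t (mu - u_x); as long as this
  stays at least 1, the half-plane u \<bullet> x \<ge> 1 separates it from the open unit disk.\<close>

lemma not_capture_guaranteed_if_separating_heading:
  assumes unit: "ux^2 + uy^2 = 1"
    and separates: "\<And>t. 0 \<le> t \<Longrightarrow> t \<le> T \<Longrightarrow> 1 \<le> ux * x0 + uy * y0 + t * (mu - ux)"
  shows "\<not> capture_guaranteed mu x0 y0 T"
proof -
  obtain c where c: "ux = cos c" "uy = sin c"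
    using sincos_total_2pi[OF unit] by blast
  have "1 \<le> norm (traj mu x0 y0 (\<lambda>_. c) t)" if "0 \<le> t" "t \<le> T" for t
  proof -
    have "(ux, uy) \<bullet> traj mu x0 y0 (\<lambda>_. c) t = ux * (x0 + t * (mu * ux - 1)) + uy * (y0 + t * (mu * uy))"
      using that(1) by (simp add: traj_const_heading c)
    also have "\<dots> = ux * x0 + uy * y0 + t * (mu * (ux^2 + uy^2) - ux)"
      by (simp add: algebra_simps power2_eq_square)
    also have "\<dots> \<ge> 1"
      using separates[OF that] unit by simp
    finally show ?thesis
      using norm_cauchy_schwarz[of "(ux, uy)" "traj mu x0 y0 (\<lambda>_. c) t"] unit
      by (simp add: norm_Pair)
  qed
  then show ?thesis
    unfolding capture_guaranteed_def by (auto intro!: exI[of _ "\<lambda>_. c"] simp: not_less)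
qed

lemma not_capture_guaranteed_if_above_line:
  assumes "mu^2 \<le> 1" and "1 \<le> mu * x0 + sqrt (1 - mu^2) * y0"
  shows "\<not> capture_guaranteed mu x0 y0 T"
  using assms by (intro not_capture_guaranteed_if_separating_heading[of mu "sqrt (1 - mu^2)"]) simp_all

lemma not_capture_guaranteed_if_le_mu:
  assumes "0 \<le> mu" and "x0 \<le> mu" and "1 < norm (x0, y0)"
  shows "\<not> capture_guaranteed mu x0 y0 T"
proof -
  define r where "r = norm (x0, y0)"
  have r: "1 < r" "r^2 = x0^2 + y0^2"
    using assms(3) by (simp_all add: r_def norm_Pair)
  show ?thesis
  proof (rule not_capture_guaranteed_if_separating_heading[of "x0 / r" "y0 / r"])
    have "(x0 / r)^2 + (y0 / r)^2 = r^2 / r^2"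
      by (simp add: r(2) power_divide add_divide_distrib del: divide_self_if)
    then show "(x0 / r)^2 + (y0 / r)^2 = 1"
      using r(1) by simp
    have "x0 / r * x0 + y0 / r * y0 = r"
      using r by (simp add: field_simps power2_eq_square)
    moreover have "x0 / r \<le> mu"
    proof (cases "x0 \<le> 0")
      case True
      then show ?thesis
        using assms(1) r(1) divide_nonpos_pos[of x0 r] by linarith
    next
      case False
      then have "x0 / r \<le> x0"
        using r(1) by (simp add: divide_le_eq)
      then show ?thesis
        using assms(2) by simp
    qed
    ultimately show "1 \<le> x0 / r * x0 + y0 / r * y0 + t * (mu - x0 / r)" if "0 \<le> t" for t
      using that r(1) by (simp add: add_increasing2)
  qed
qed

text \<open>The hypotheses say that at time t1 the reachable disk touches the unit circle from inside,
  at the point u = (x0 - t1, y0) / (1 - mu t1), and that u_x \<ge> mu. Holding the heading u, the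
  Evader stays on the outer side of the tangent line at u up to time t1.\<close>

lemma not_capture_guaranteed_if_tangent_at:
  assumes pos: "0 < 1 - mu * t1"
    and tangent: "(x0 - t1)^2 + y0^2 = (1 - mu * t1)^2"
    and outward: "mu * (1 - mu * t1) \<le> x0 - t1"
    and "T \<le> t1"
  shows "\<not> capture_guaranteed mu x0 y0 T"
proof -
  define q where "q = 1 - mu * t1"
  have "q > 0" using pos by (simp add: q_def)
  show ?thesis
  proof (rule not_capture_guaranteed_if_separating_heading[of "(x0 - t1) / q" "y0 / q"])
    show "((x0 - t1) / q)^2 + (y0 / q)^2 = 1"
      using tangent \<open>q > 0\<close> by (simp add: q_def power_divide flip: add_divide_distrib)
    have "((x0 - t1) / q * x0 + y0 / q * y0 + t1 * (mu - (x0 - t1) / q)) * q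
        = (x0 - t1)^2 + y0^2 + mu * t1 * q"
      using \<open>q > 0\<close> by (simp add: field_simps power2_eq_square)
    also have "\<dots> = q^2 + mu * t1 * q"
      by (simp add: tangent q_def)
    also have "\<dots> = q"
      by (simp add: q_def power2_eq_square algebra_simps)
    finally have at_t1: "(x0 - t1) / q * x0 + y0 / q * y0 + t1 * (mu - (x0 - t1) / q) = 1"
      using \<open>q > 0\<close> by simp
    have "mu \<le> (x0 - t1) / q"
      using outward \<open>q > 0\<close> by (simp add: q_def le_divide_eq mult.commute)
    then show "1 \<le> (x0 - t1) / q * x0 + y0 / q * y0 + t * (mu - (x0 - t1) / q)" if "t \<le> T" for t
      using at_t1 that \<open>T \<le> t1\<close> mult_right_mono[of t t1 "(x0 - t1) / q - mu"]
      by (simp add: algebra_simps)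
  qed
qed

text \<open>Up to the factor 1 - mu^2, the gap between the squared distance of the drift point from the
  origin and (1 - mu t)^2 is a quadratic in t; T_survive is its smaller root.\<close>

lemma tangency_quadratic:
  fixes mu x0 y0 t :: real
  shows "(1 - mu^2) * ((x0 - t)^2 + y0^2 - (1 - mu * t)^2)
    = (x0 - mu - (1 - mu^2) * t)^2 - ((1 - mu * x0)^2 - (1 - mu^2) * y0^2)"
  by (simp add: power2_eq_square algebra_simps)

lemma discriminant_pos:
  fixes mu x0 y0 :: real
  assumes "mu^2 < 1" and "0 \<le> y0" and "mu * x0 + sqrt (1 - mu^2) * y0 < 1"
  shows "0 < 1 - mu * x0" and "0 < (1 - mu * x0)^2 - (1 - mu^2) * y0^2"
proof -
  have "0 \<le> sqrt (1 - mu^2) * y0"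
    using assms(1,2) by simp
  then show "0 < 1 - mu * x0"
    using assms(3) by linarith
  have "(sqrt (1 - mu^2) * y0)^2 < (1 - mu * x0)^2"
    using assms(3) \<open>0 \<le> sqrt (1 - mu^2) * y0\<close> by (intro power_strict_mono) auto
  then show "0 < (1 - mu * x0)^2 - (1 - mu^2) * y0^2"
    using assms(1) by (simp add: power_mult_distrib)
qed

lemma T_survive_eq:
  fixes mu x0 y0 :: real
  assumes "mu^2 < 1"
  shows "(1 - mu^2) * T_survive mu x0 y0 = x0 - mu - sqrt ((1 - mu * x0)^2 - (1 - mu^2) * y0^2)"
  using assms by (simp add: T_survive_def)

lemma T_survive_pos:
  fixes mu x0 y0 :: real
  assumes "mu^2 < 1" and "1 < norm (x0, y0)" and "mu < x0"
  shows "0 < T_survive mu x0 y0"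
proof -
  have "(1 - mu * x0)^2 - (1 - mu^2) * y0^2 = (x0 - mu)^2 - (1 - mu^2) * (x0^2 + y0^2 - 1)"
    by (simp add: power2_eq_square algebra_simps)
  also have "\<dots> < (x0 - mu)^2"
    using assms(1,2) by (simp add: norm_Pair real_less_rsqrt)
  finally have "sqrt ((1 - mu * x0)^2 - (1 - mu^2) * y0^2) < x0 - mu"
    using assms(3) real_sqrt_less_mono by fastforce
  then have "0 < (1 - mu^2) * T_survive mu x0 y0"
    using assms(1) by (simp add: T_survive_eq)
  then show ?thesis
    using assms(1) by (simp add: zero_less_mult_iff)
qed

lemma T_survive_tangent:
  fixes mu x0 y0 :: real
  assumes "0 \<le> mu" and "mu < 1" and "0 \<le> y0" and "mu * x0 + sqrt (1 - mu^2) * y0 < 1"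
  defines "t1 \<equiv> T_survive mu x0 y0"
  shows "0 < 1 - mu * t1"
    and "(x0 - t1)^2 + y0^2 = (1 - mu * t1)^2"
    and "mu * (1 - mu * t1) \<le> x0 - t1"
proof -
  define D where "D = (1 - mu * x0)^2 - (1 - mu^2) * y0^2"
  have mu2: "mu^2 < 1"
    using assms(1,2) by (simp add: power_less_one_iff)
  then have k: "0 < 1 - mu^2" by simp
  have "0 < 1 - mu * x0" "0 < D"
    using discriminant_pos[OF mu2 assms(3,4)] by (simp_all add: D_def)
  have kt1: "(1 - mu^2) * t1 = x0 - mu - sqrt D"
    using T_survive_eq[OF mu2] by (simp add: t1_def D_def)
  have "(1 - mu^2) * (1 - mu * t1) = 1 - mu^2 - mu * ((1 - mu^2) * t1)"
    by (simp add: algebra_simps)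
  also have "\<dots> = 1 - mu * x0 + mu * sqrt D"
    unfolding kt1 by (simp add: algebra_simps power2_eq_square)
  also have "\<dots> > 0"
    using \<open>0 < 1 - mu * x0\<close> \<open>0 < D\<close> assms(1) by (simp add: add_pos_nonneg)
  finally show "0 < 1 - mu * t1"
    using k by (simp add: zero_less_mult_iff)
  have "(1 - mu^2) * ((x0 - t1)^2 + y0^2 - (1 - mu * t1)^2) = 0"
    using \<open>0 < D\<close> by (simp add: tangency_quadratic kt1 D_def)
  then show "(x0 - t1)^2 + y0^2 = (1 - mu * t1)^2"
    using k by simp
  have "(1 - mu^2) * t1 \<le> x0 - mu"
    using kt1 \<open>0 < D\<close> by simp
  then show "mu * (1 - mu * t1) \<le> x0 - t1"
    by (simp add: algebra_simps power2_eq_square)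
qed

lemma not_capture_guaranteed_if_le_T_survive:
  fixes mu x0 y0 T :: real
  assumes "0 \<le> mu" and "mu < 1" and "0 \<le> y0" and "mu * x0 + sqrt (1 - mu^2) * y0 < 1"
    and "T \<le> T_survive mu x0 y0"
  shows "\<not> capture_guaranteed mu x0 y0 T"
  using not_capture_guaranteed_if_tangent_at T_survive_tangent[OF assms(1-4)] assms(5) by blast

lemma reachable_disk_inside_after_T_survive:
  fixes mu x0 y0 t :: real
  assumes "0 \<le> mu" and "mu < 1" and "0 \<le> y0" and "mu * x0 + sqrt (1 - mu^2) * y0 < 1"
    and "T_survive mu x0 y0 < t" and "(1 - mu^2) * t < x0 - mu"
  shows "norm (x0 - t, y0) + mu * t < 1"
proof -
  define D where "D = (1 - mu * x0)^2 - (1 - mu^2) * y0^2"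
  define e where "e = x0 - mu - (1 - mu^2) * t"
  have mu2: "mu^2 < 1"
    using assms(1,2) by (simp add: power_less_one_iff)
  then have k: "0 < 1 - mu^2" by simp
  have "0 < 1 - mu * x0" "0 < D"
    using discriminant_pos[OF mu2 assms(3,4)] by (simp_all add: D_def)
  have "(1 - mu^2) * T_survive mu x0 y0 < (1 - mu^2) * t"
    using assms(5) k by simp
  then have "e < sqrt D"
    using T_survive_eq[OF mu2] by (simp add: e_def D_def)
  moreover have "0 < e"
    using assms(6) by (simp add: e_def)
  ultimately have "(1 - mu^2) * ((x0 - t)^2 + y0^2 - (1 - mu * t)^2) < 0"
    using \<open>0 < D\<close> power_strict_mono[of e "sqrt D" 2]
    by (simp add: tangency_quadratic flip: e_def D_def)
  then have inside: "(x0 - t)^2 + y0^2 < (1 - mu * t)^2"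
    using k by (simp add: mult_less_0_iff)
  have "(1 - mu^2) * (1 - mu * t) = 1 - mu * x0 + mu * e"
    by (simp add: e_def algebra_simps power2_eq_square)
  also have "\<dots> > 0"
    using \<open>0 < 1 - mu * x0\<close> \<open>0 < e\<close> assms(1) by (simp add: add_pos_nonneg)
  finally have "0 < 1 - mu * t"
    using k by (simp add: zero_less_mult_iff)
  with inside have "norm (x0 - t, y0) < 1 - mu * t"
    by (simp add: norm_Pair real_sqrt_less_iff real_less_lsqrt)
  then show ?thesis by simp
qed

lemma capture_guaranteed_if_T_survive_less:
  fixes mu x0 y0 T :: real
  assumes "0 < mu" and "mu < 1" and "0 \<le> y0" and "1 < norm (x0, y0)"
    and "mu * x0 + sqrt (1 - mu^2) * y0 < 1" and "mu < x0" and "T_survive mu x0 y0 < T"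
  shows "capture_guaranteed mu x0 y0 T"
proof -
  define m where "m = (x0 - mu) / (1 - mu^2)"
  define t where "t = (T_survive mu x0 y0 + min T m) / 2"
  have mu2: "mu^2 < 1"
    using assms(1,2) by (simp add: power_less_one_iff)
  then have k: "0 < 1 - mu^2" by simp
  have "0 < sqrt ((1 - mu * x0)^2 - (1 - mu^2) * y0^2)"
    using discriminant_pos[OF mu2 assms(3,5)] by simp
  then have "(1 - mu^2) * T_survive mu x0 y0 < (1 - mu^2) * m"
    using k by (simp add: T_survive_eq[OF mu2] m_def)
  then have "T_survive mu x0 y0 < m"
    using k by simp
  then have t: "T_survive mu x0 y0 < t" "t < T" "t < m"
    using assms(7) by (auto simp: t_def)
  have "0 \<le> t"
    using T_survive_pos[OF mu2 assms(4,6)] t(1) by simp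
  have "(1 - mu^2) * t < x0 - mu"
    using t(3) k by (simp add: m_def pos_less_divide_eq mult.commute)
  then have "norm (x0 - t, y0) + \<bar>mu\<bar> * t < 1"
    using reachable_disk_inside_after_T_survive[of mu y0 x0 t] assms t(1) by simp
  with \<open>0 \<le> t\<close> t(2) show ?thesis
    by (intro capture_guaranteed_if_reachable_disk_inside) auto
qed

theorem lemma3:
  fixes mu x0 y0 T :: real
  assumes "0 < mu" and "mu < 1"
    and "norm (x0, y0) > 1" and "y0 \<ge> 0" and "T > 0"
  shows "(\<forall>psi. psi \<in> borel_measurable lborel \<longrightarrow>
            (\<exists>t\<in>{0..T}. norm (traj mu x0 y0 psi t) < 1))
         \<longleftrightarrow> (mu * x0 + sqrt (1 - mu^2) * y0 < 1 \<and> x0 > mu \<and> T > T_survive mu x0 y0)"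
  unfolding capture_guaranteed_def[symmetric]
proof
  assume capture: "capture_guaranteed mu x0 y0 T"
  have mu2: "mu^2 \<le> 1"
    using assms(1,2) by (simp add: power_le_one)
  have line: "mu * x0 + sqrt (1 - mu^2) * y0 < 1"
    using not_capture_guaranteed_if_above_line[OF mu2] capture by force
  moreover have "mu < x0"
    using not_capture_guaranteed_if_le_mu[of mu x0 y0 T] assms(1,3) capture by force
  moreover have "T_survive mu x0 y0 < T"
    using not_capture_guaranteed_if_le_T_survive[of mu y0 x0 T] assms(1,2,4) line capture
    by force
  ultimately show "mu * x0 + sqrt (1 - mu^2) * y0 < 1 \<and> x0 > mu \<and> T > T_survive mu x0 y0"
    by simp
next
  assume "mu * x0 + sqrt (1 - mu^2) * y0 < 1 \<and> x0 > mu \<and> T > T_survive mu x0 y0"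
  then show "capture_guaranteed mu x0 y0 T"
    using capture_guaranteed_if_T_survive_less assms(1-4) by blast
qed

end
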